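(* Let $\mu>0$ and $\gamma\in\mathbb{R}$. A number $z\in\mathbb{C}\setminus\Sigma_\mu$ is an eigenvalue of the operator $\mathcal{A}_\mu$ if and only if $\lambda=1$ is an eigenvalue of the integral operator $T_\mu(z)$ acting in $L_2(\mathbb{T}^3)$ by $$(T_\mu(z)g)(p)=\frac{\mu^2}{2\Delta_\mu(p;z)}\int_{\mathbb{T}^3}\frac{g(t)\,dt}{w_2(p,t)-z}.$$ Moreover, the multiplicity of $z$ as an eigenvalue of $\mathcal{A}_\mu$ equals the multiplicity of $1$ as an eigenvalue of $T_\mu(z)$.
   Context: $\mathbb{T}^3=(-\pi,\pi]^3$ is the three-dimensional torus with normalized Haar measure. $\mathcal{H}_1=L_2(\mathbb{T}^3)$, $\mathcal{H}_2=L_2^{\rm s}((\mathbb{T}^3)^2)$ (square-integrable symmetric functions $f(k,p)=f(p,k)$), $\mathcal{H}=\mathcal{H}_1\oplus\mathcal{H}_2$. Let $\varepsilon(k)=\sum_{i=1}^3(1-\cos k_i)$, $w_1(k)=\varepsilon(k)+\gamma$ with $\gamma\in\mathbb{R}$, and $w_2(k,p)=\varepsilon(k)+\varepsilon(\tfrac12(k+p))+\varepsilon(p)$. For $\mu>0$, $\mathcal{A}_\mu$ is the bounded self-adjoint operator on $\mathcal{H}$ given by $\mathcal{A}_\mu=\begin{pmatrix}A_{11}&\mu A_{12}\\ \mu A_{12}^*&A_{22}\end{pmatrix}$, where $(A_{11}f_1)(k)=w_1(k)f_1(k)$, $(A_{12}f_2)(k)=\int_{\mathbb{T}^3}f_2(k,s)\,ds$,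 $(A_{12}^*f_1)(k,p)=\tfrac12(f_1(k)+f_1(p))$, $(A_{22}f_2)(k,p)=w_2(k,p)f_2(k,p)$. For $k\in\mathbb{T}^3$ let $m(k)=\min_p w_2(k,p)$, $M(k)=\max_p w_2(k,p)$, $I(k;z)=\int_{\mathbb{T}^3}\frac{dt}{w_2(k,t)-z}$ and $\Delta_\mu(k;z)=w_1(k)-z-\frac{\mu^2}{2}I(k;z)$ for $z\in\mathbb{C}\setminus[m(k),M(k)]$. Let $\mathcal{A}_\mu(k)$ be the operator on $\mathbb{C}\oplus L_2(\mathbb{T}^3)$ given by $\mathcal{A}_\mu(k)(f_0,f_1)=\big(w_1(k)f_0+\tfrac{\mu}{\sqrt2}\int_{\mathbb{T}^3}f_1(t)dt,\ \tfrac{\mu}{\sqrt2}f_0+w_2(k,\cdot)f_1(\cdot)\big)$; its discrete spectrum is $\{z\in\mathbb{C}\setminus[m(k),M(k)]:\Delta_\mu(k;z)=0\}$. Set $m=\min_{k,p}w_2(k,p)$, $M=\max_{k,p}w_2(k,p)$, $\Lambda_\mu=\bigcup_{k\in\mathbb{T}^3}\sigma_{\rm disc}(\mathcal{A}_\mu(k))$, and $\Sigma_\mu=[m,M]\cup\Lambda_\mu$. *)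

theory Defs
  imports "HOL-Analysis.Analysis" "HOL-Library.Extended_Nat"
begin

type_synonym pt = "real^3"

definition T3 :: "pt set" where
  "T3 = {x. \<forall>i. - pi < x$i \<and> x$i \<le> pi}"

definition torus :: "pt measure" where
  "torus = density (restrict_space lborel T3) (\<lambda>_. ennreal (1 / (2*pi)^3))"

definition torus2 :: "(pt \<times> pt) measure" where
  "torus2 = torus \<Otimes>\<^sub>M torus"

definition eps :: "pt \<Rightarrow> real" where
  "eps k = (\<Sum>i\<in>UNIV. 1 - cos (k$i))"

definition w1 :: "real \<Rightarrow> pt \<Rightarrow> real" where
  "w1 gamma k = eps k + gamma"

definition w2 :: "pt \<Rightarrow> pt \<Rightarrow> real" where
  "w2 k p = eps k + eps ((1/2) *\<^sub>R (k + p)) + eps p"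

definition sq_int :: "'a measure \<Rightarrow> ('a \<Rightarrow> complex) \<Rightarrow> bool" where
  "sq_int M f \<longleftrightarrow> f \<in> borel_measurable M \<and> integrable M (\<lambda>x. (cmod (f x))^2)"

definition H1 :: "(pt \<Rightarrow> complex) set" where
  "H1 = {f. sq_int torus f}"

definition H2 :: "(pt \<times> pt \<Rightarrow> complex) set" where
  "H2 = {f. sq_int torus2 f \<and> (AE x in torus2. f x = f (snd x, fst x))}"

definition mlow :: "pt \<Rightarrow> real" where
  "mlow k = (INF p\<in>T3. w2 k p)"

definition Mup :: "pt \<Rightarrow> real" where
  "Mup k = (SUP p\<in>T3. w2 k p)"

definition mlow_all :: real where
  "mlow_all = (INF x\<in>T3 \<times> T3. w2 (fst x) (snd x))"

definition Mup_all :: real where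
  "Mup_all = (SUP x\<in>T3 \<times> T3. w2 (fst x) (snd x))"

definition Iint :: "pt \<Rightarrow> complex \<Rightarrow> complex" where
  "Iint k z = integral\<^sup>L torus (\<lambda>t. 1 / (complex_of_real (w2 k t) - z))"

definition Delta_mu :: "real \<Rightarrow> real \<Rightarrow> pt \<Rightarrow> complex \<Rightarrow> complex" where
  "Delta_mu mu gamma k z =
     complex_of_real (w1 gamma k) - z - complex_of_real (mu^2 / 2) * Iint k z"

text \<open>Lambda_mu: union over k of the discrete spectra of the fiber operators A_mu(k),
  i.e. the zeros of Delta_mu(k;.) outside [m(k),M(k)].\<close>
definition Lambda_mu :: "real \<Rightarrow> real \<Rightarrow> complex set" where
  "Lambda_mu mu gamma = {z. \<exists>k\<in>T3. z \<notin> complex_of_real ` {mlow k .. Mup k}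
                                   \<and> Delta_mu mu gamma k z = 0}"

definition Sigma_mu :: "real \<Rightarrow> real \<Rightarrow> complex set" where
  "Sigma_mu mu gamma = complex_of_real ` {mlow_all .. Mup_all} \<union> Lambda_mu mu gamma"

definition A1 :: "real \<Rightarrow> real \<Rightarrow> (pt \<Rightarrow> complex) \<Rightarrow> (pt \<times> pt \<Rightarrow> complex) \<Rightarrow> pt \<Rightarrow> complex" where
  "A1 mu gamma f1 f2 k =
     complex_of_real (w1 gamma k) * f1 k + complex_of_real mu * integral\<^sup>L torus (\<lambda>s. f2 (k, s))"

definition A2 :: "real \<Rightarrow> (pt \<Rightarrow> complex) \<Rightarrow> (pt \<times> pt \<Rightarrow> complex) \<Rightarrow> pt \<times> pt \<Rightarrow> complex" where
  "A2 mu f1 f2 x =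
     complex_of_real mu * ((f1 (fst x) + f1 (snd x)) / 2)
     + complex_of_real (w2 (fst x) (snd x)) * f2 x"

definition eigvecs_A :: "real \<Rightarrow> real \<Rightarrow> complex \<Rightarrow> ((pt \<Rightarrow> complex) \<times> (pt \<times> pt \<Rightarrow> complex)) set" where
  "eigvecs_A mu gamma z = {(f1, f2). f1 \<in> H1 \<and> f2 \<in> H2
      \<and> (AE k in torus. A1 mu gamma f1 f2 k = z * f1 k)
      \<and> (AE x in torus2. A2 mu f1 f2 x = z * f2 x)}"

definition null_H :: "(pt \<Rightarrow> complex) \<times> (pt \<times> pt \<Rightarrow> complex) \<Rightarrow> bool" where
  "null_H f \<longleftrightarrow> (AE k in torus. fst f k = 0) \<and> (AE x in torus2. snd f x = 0)"

definition lincomb_H :: "nat \<Rightarrow> (nat \<Rightarrow> complex) \<Rightarrow> (nat \<Rightarrow> (pt \<Rightarrow> complex) \<times> (pt \<times> pt \<Rightarrow> complex))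
     \<Rightarrow> (pt \<Rightarrow> complex) \<times> (pt \<times> pt \<Rightarrow> complex)" where
  "lincomb_H n c F = ((\<lambda>k. \<Sum>i<n. c i * fst (F i) k), (\<lambda>x. \<Sum>i<n. c i * snd (F i) x))"

definition is_eigenvalue_A :: "real \<Rightarrow> real \<Rightarrow> complex \<Rightarrow> bool" where
  "is_eigenvalue_A mu gamma z \<longleftrightarrow> (\<exists>f\<in>eigvecs_A mu gamma z. \<not> null_H f)"

text \<open>Multiplicity = dimension of the eigenspace (elements modulo a.e. equality), in enat.\<close>
definition mult_A :: "real \<Rightarrow> real \<Rightarrow> complex \<Rightarrow> enat" where
  "mult_A mu gamma z = Sup {enat n | n. \<exists>F. (\<forall>i<n. F i \<in> eigvecs_A mu gamma z) \<and>
      (\<forall>c. null_H (lincomb_H n c F) \<longrightarrow> (\<forall>i<n. c i = 0))}"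

definition T_op :: "real \<Rightarrow> real \<Rightarrow> complex \<Rightarrow> (pt \<Rightarrow> complex) \<Rightarrow> pt \<Rightarrow> complex" where
  "T_op mu gamma z g p =
     complex_of_real (mu^2) / (2 * Delta_mu mu gamma p z)
     * integral\<^sup>L torus (\<lambda>t. g t / (complex_of_real (w2 p t) - z))"

definition eigvecs_T :: "real \<Rightarrow> real \<Rightarrow> complex \<Rightarrow> complex \<Rightarrow> (pt \<Rightarrow> complex) set" where
  "eigvecs_T mu gamma z lam = {g. g \<in> H1 \<and> (AE p in torus. T_op mu gamma z g p = lam * g p)}"

definition is_eigenvalue_T :: "real \<Rightarrow> real \<Rightarrow> complex \<Rightarrow> complex \<Rightarrow> bool" where
  "is_eigenvalue_T mu gamma z lam \<longleftrightarrow>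
     (\<exists>g\<in>eigvecs_T mu gamma z lam. \<not> (AE p in torus. g p = 0))"

definition mult_T :: "real \<Rightarrow> real \<Rightarrow> complex \<Rightarrow> complex \<Rightarrow> enat" where
  "mult_T mu gamma z lam = Sup {enat n | n. \<exists>G. (\<forall>i<n. G i \<in> eigvecs_T mu gamma z lam) \<and>
      (\<forall>c. (AE p in torus. (\<Sum>i<n. c i * G i p) = 0) \<longrightarrow> (\<forall>i<n. c i = 0))}"

end

theory Submission
  imports Defs
begin

text \<open>For z off the band [m, M] the second row of \<open>(A_mu - z) f = 0\<close> can be solved for the
  two-particle component, \<open>f2 k p = - mu (f1 k + f1 p) / (2 (w2 k p - z))\<close>, and as \<open>w2 - z\<close> is
  bounded away from zero on the torus this \<open>f2\<close> is square integrable. Inserting it into the first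
  row gives \<open>Delta_mu k z f1 k = (mu^2/2) \<integral> f1 t / (w2 k t - z) dt\<close>; since \<open>Delta_mu\<close> does not
  vanish for \<open>z \<notin> Lambda_mu\<close>, this is the fixed point equation \<open>T_mu z f1 = f1\<close>. So projection to
  the first component is a linear bijection between the two eigenspaces which sends null vectors
  exactly to null functions.\<close>

section \<open>The torus as a finite measure space\<close>

lemma T3_borel: "T3 \<in> sets borel"
proof -
  have "T3 = (\<Inter>i. {x::pt. - pi < x$i} \<inter> {x. x$i \<le> pi})"
    unfolding T3_def by auto
  also have "\<dots> \<in> sets borel"
    by (intro sets.finite_INT)
      (auto intro!: borel_open borel_closed open_Collect_less closed_Collect_le continuous_intros)
  finally show ?thesis .
qed

lemma space_torus [simp]: "space torus = T3"
  unfolding torus_def by (simp add: space_restrict_space)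

lemma space_torus2 [simp]: "space torus2 = T3 \<times> T3"
  unfolding torus2_def by (simp add: space_pair_measure)

lemma finite_measure_torus: "finite_measure torus"
proof -
  have "emeasure lborel T3 \<le> emeasure lborel (cbox (\<chi> i. - pi) (\<chi> i. pi) :: pt set)"
    by (intro emeasure_mono) (auto simp: T3_def mem_box_cart less_imp_le)
  then have "emeasure lborel T3 < \<infinity>"
    using emeasure_lborel_cbox_finite by (rule le_less_trans)
  then have "finite_measure (restrict_space lborel T3)"
    by (intro finite_measureI) (simp add: space_restrict_space emeasure_restrict_space T3_borel)
  then show ?thesis
    unfolding torus_def
    by (intro finite_measureI)
      (simp add: emeasure_density_const finite_measure.emeasure_finite ennreal_mult_eq_top_iff)
qed

interpretation torus: finite_measure torus
  by (rule finite_measure_torus)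

interpretation torus2: pair_sigma_finite torus torus
  by (simp add: pair_sigma_finite_def torus.sigma_finite_measure_axioms)

lemma borel_measurable_torus: "f \<in> borel_measurable borel \<Longrightarrow> f \<in> borel_measurable torus"
  unfolding torus_def by (simp add: measurable_restrict_space1)

lemma borel_measurable_torus2:
  assumes "f \<in> borel_measurable borel"
  shows "f \<in> borel_measurable torus2"
proof -
  have "(\<lambda>x. x) \<in> measurable torus (borel :: pt measure)"
    by (rule borel_measurable_torus) simp
  then have "(\<lambda>x. (fst x, snd x)) \<in> measurable torus2 (borel \<Otimes>\<^sub>M (borel :: pt measure))"
    unfolding torus2_def by (intro measurable_Pair measurable_compose[OF measurable_fst]
        measurable_compose[OF measurable_snd])
  then have "(\<lambda>x. x) \<in> measurable torus2 (borel :: (pt \<times> pt) measure)"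
    by (simp add: borel_prod)
  then show ?thesis
    using measurable_comp[OF _ assms] by (simp add: comp_def)
qed

lemma borel_measurable_torus2_fst:
  "g \<in> borel_measurable torus \<Longrightarrow> (\<lambda>x. g (fst x)) \<in> borel_measurable torus2"
  unfolding torus2_def by (rule measurable_compose[OF measurable_fst])

lemma borel_measurable_torus2_snd:
  "g \<in> borel_measurable torus \<Longrightarrow> (\<lambda>x. g (snd x)) \<in> borel_measurable torus2"
  unfolding torus2_def by (rule measurable_compose[OF measurable_snd])

lemma integrable_torus2_fst:
  fixes h :: "pt \<Rightarrow> real"
  assumes "integrable torus h"
  shows "integrable torus2 (\<lambda>x. h (fst x))"
  unfolding torus2_def
proof (rule torus2.Fubini_integrable)
  show "(\<lambda>x. h (fst x)) \<in> borel_measurable (torus \<Otimes>\<^sub>M torus)"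
    using borel_measurable_torus2_fst[of h] assms by (simp add: torus2_def)
qed (use assms in \<open>simp_all add: integrable_norm\<close>)

lemma integrable_torus2_snd:
  fixes h :: "pt \<Rightarrow> real"
  assumes "integrable torus h"
  shows "integrable torus2 (\<lambda>x. h (snd x))"
  unfolding torus2_def
proof (rule torus2.Fubini_integrable)
  show "(\<lambda>x. h (snd x)) \<in> borel_measurable (torus \<Otimes>\<^sub>M torus)"
    using borel_measurable_torus2_snd[of h] assms by (simp add: torus2_def)
qed (use assms in simp_all)

lemma H1_integrable: "g \<in> H1 \<Longrightarrow> integrable torus g"
  using torus.square_integrable_imp_integrable[of "\<lambda>x. cmod (g x)"]
  by (auto simp: H1_def sq_int_def intro: integrable_norm_cancel)

section \<open>The dispersion relation and the band [m, M]\<close>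

lemma eps_nonneg: "0 \<le> eps k"
  unfolding eps_def by (intro sum_nonneg) simp

lemma eps_le_6: "eps k \<le> 6"
proof -
  have "eps k \<le> (\<Sum>i\<in>(UNIV::3 set). 2)"
    unfolding eps_def by (intro sum_mono) (smt (verit) cos_ge_minus_one)
  then show ?thesis by simp
qed

lemma continuous_on_eps: "continuous_on UNIV eps"
  unfolding eps_def by (intro continuous_intros)

lemma w2_commute: "w2 k p = w2 p k"
  unfolding w2_def by (simp add: add.commute add.left_commute)

lemma w2_bounds: "0 \<le> w2 k p" "w2 k p \<le> 18"
  unfolding w2_def using eps_nonneg eps_le_6 by (smt (verit))+

lemma borel_measurable_w2_torus [measurable]: "w2 k \<in> borel_measurable torus"
proof -
  have "continuous_on UNIV (w2 k)"
    unfolding w2_def by (intro continuous_intros continuous_on_compose2[OF continuous_on_eps]) auto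
  then show ?thesis
    using borel_measurable_continuous_onI borel_measurable_torus by blast
qed

lemma borel_measurable_w2_torus2: "(\<lambda>x. w2 (fst x) (snd x)) \<in> borel_measurable torus2"
proof -
  have "continuous_on UNIV (\<lambda>x::pt \<times> pt. w2 (fst x) (snd x))"
    unfolding w2_def by (intro continuous_intros continuous_on_compose2[OF continuous_on_eps]) auto
  then show ?thesis
    using borel_measurable_continuous_onI borel_measurable_torus2 by blast
qed

lemma w2_mem_band: "a \<in> T3 \<Longrightarrow> b \<in> T3 \<Longrightarrow> w2 a b \<in> {mlow_all..Mup_all}"
proof -
  assume "a \<in> T3" "b \<in> T3"
  have below: "bdd_below ((\<lambda>x. w2 (fst x) (snd x)) ` (T3 \<times> T3))"
    by (rule bdd_belowI2[where m = 0]) (simp add: w2_bounds)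
  have above: "bdd_above ((\<lambda>x. w2 (fst x) (snd x)) ` (T3 \<times> T3))"
    by (rule bdd_aboveI2[where M = 18]) (simp add: w2_bounds)
  show ?thesis
    unfolding mlow_all_def Mup_all_def
    using cINF_lower[OF below, of "(a, b)"] cSUP_upper[OF _ above, of "(a, b)"] \<open>a \<in> T3\<close> \<open>b \<in> T3\<close>
    by auto
qed

lemma fibre_band_subset:
  assumes "k \<in> T3"
  shows "{mlow k..Mup k} \<subseteq> {mlow_all..Mup_all}"
proof -
  have "T3 \<noteq> {}"
    unfolding T3_def by (auto intro!: exI[of _ 0])
  then have "mlow_all \<le> mlow k" "Mup k \<le> Mup_all"
    unfolding mlow_def Mup_def using w2_mem_band assms
    by (auto intro!: cINF_greatest cSUP_least)
  then show ?thesis by auto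
qed

lemma band_gap:
  assumes "z \<notin> complex_of_real ` {mlow_all..Mup_all}"
  obtains d where "d > 0"
    and "\<And>a b. a \<in> T3 \<Longrightarrow> b \<in> T3 \<Longrightarrow> d \<le> cmod (complex_of_real (w2 a b) - z)"
proof -
  have "closed (complex_of_real ` {mlow_all..Mup_all})"
    by (intro compact_imp_closed compact_continuous_image continuous_intros compact_Icc)
  from separate_point_closed[OF this assms] obtain d
    where "d > 0" "\<forall>x \<in> complex_of_real ` {mlow_all..Mup_all}. d \<le> dist z x"
    by blast
  then show ?thesis
    using w2_mem_band by (intro that[of d]) (auto simp: dist_norm norm_minus_commute)
qed

lemma Delta_mu_nonzero:
  assumes "z \<notin> Sigma_mu mu gamma" and "k \<in> T3"
  shows "Delta_mu mu gamma k z \<noteq> 0"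
  using assms fibre_band_subset[OF assms(2)] by (auto simp: Sigma_mu_def Lambda_mu_def)

section \<open>Solving the two-particle equation\<close>

definition second_component :: "real \<Rightarrow> complex \<Rightarrow> (pt \<Rightarrow> complex) \<Rightarrow> pt \<times> pt \<Rightarrow> complex" where
  "second_component mu z g x =
     - complex_of_real mu * (g (fst x) + g (snd x)) / (2 * (complex_of_real (w2 (fst x) (snd x)) - z))"

lemma second_component_sum:
  "(\<Sum>i<n. c i * second_component mu z (G i) x) = second_component mu z (\<lambda>k. \<Sum>i<n. c i * G i k) x"
  unfolding second_component_def
  by (simp add: divide_inverse sum_distrib_left sum_distrib_right sum.distrib sum_subtractf sum_negf algebra_simps)

lemma borel_measurable_second_component:
  assumes "g \<in> borel_measurable torus"
  shows "second_component mu z g \<in> borel_measurable torus2"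
  unfolding second_component_def
  using borel_measurable_torus2_fst[OF assms] borel_measurable_torus2_snd[OF assms]
    borel_measurable_w2_torus2
  by measurable

lemma second_component_null:
  assumes "g \<in> borel_measurable torus" and "AE k in torus. g k = 0"
  shows "AE x in torus2. second_component mu z g x = 0"
proof -
  have "AE x in torus \<Otimes>\<^sub>M torus. g (fst x) = 0 \<and> g (snd x) = 0"
  proof (rule torus2.AE_pair_measure)
    show "{x \<in> space (torus \<Otimes>\<^sub>M torus). g (fst x) = 0 \<and> g (snd x) = 0} \<in> sets (torus \<Otimes>\<^sub>M torus)"
      using borel_measurable_torus2_fst[OF assms(1)] borel_measurable_torus2_snd[OF assms(1)]
      unfolding torus2_def by measurable
    show "AE x in torus. AE y in torus. g (fst (x, y)) = 0 \<and> g (snd (x, y)) = 0"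
      using assms(2) by eventually_elim (use assms(2) in simp)
  qed
  then show ?thesis
    unfolding torus2_def by eventually_elim (simp add: second_component_def)
qed

lemma norm_second_component_square_le:
  assumes "d > 0" and "d \<le> cmod (complex_of_real (w2 (fst x) (snd x)) - z)"
  shows "(cmod (second_component mu z g x))^2
    \<le> 2 * (\<bar>mu\<bar> / (2 * d))^2 * ((cmod (g (fst x)))^2 + (cmod (g (snd x)))^2)"
proof -
  let ?a = "cmod (g (fst x))" and ?b = "cmod (g (snd x))"
  have "cmod (2 * (complex_of_real (w2 (fst x) (snd x)) - z))
      = 2 * cmod (complex_of_real (w2 (fst x) (snd x)) - z)"
    by (simp only: norm_mult) simp
  then have "cmod (second_component mu z g x)
      = \<bar>mu\<bar> * cmod (g (fst x) + g (snd x)) / (2 * cmod (complex_of_real (w2 (fst x) (snd x)) - z))"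
    unfolding second_component_def norm_divide norm_mult norm_minus_cancel by simp
  also have "\<dots> \<le> \<bar>mu\<bar> * (?a + ?b) / (2 * d)"
    using assms norm_triangle_ineq[of "g (fst x)" "g (snd x)"]
    by (intro frac_le mult_left_mono) auto
  finally have "cmod (second_component mu z g x) \<le> \<bar>mu\<bar> / (2 * d) * (?a + ?b)"
    by simp
  then have "(cmod (second_component mu z g x))^2 \<le> (\<bar>mu\<bar> / (2 * d) * (?a + ?b))^2"
    by (intro power_mono) auto
  also have "\<dots> = (\<bar>mu\<bar> / (2 * d))^2 * (?a + ?b)^2"
    by (simp only: power_mult_distrib)
  also have "\<dots> \<le> (\<bar>mu\<bar> / (2 * d))^2 * (2 * (?a^2 + ?b^2))"
    using sum_squares_bound[of ?a ?b] by (intro mult_left_mono) (simp_all add: power2_sum)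
  finally show ?thesis
    by (simp add: algebra_simps)
qed

context
  fixes z :: complex
  assumes off_band: "z \<notin> complex_of_real ` {mlow_all..Mup_all}"
begin

lemma w2_minus_nonzero: "a \<in> T3 \<Longrightarrow> b \<in> T3 \<Longrightarrow> complex_of_real (w2 a b) - z \<noteq> 0"
  using off_band w2_mem_band by force

lemma integrable_divide_w2:
  assumes "k \<in> T3" and "integrable torus g"
  shows "integrable torus (\<lambda>t. g t / (complex_of_real (w2 k t) - z))"
proof -
  obtain d where d: "d > 0" "\<And>a b. a \<in> T3 \<Longrightarrow> b \<in> T3 \<Longrightarrow> d \<le> cmod (complex_of_real (w2 a b) - z)"
    using band_gap[OF off_band] by blast
  show ?thesis
  proof (rule Bochner_Integration.integrable_bound)
    show "integrable torus (\<lambda>t. norm (g t) / d)"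
      using assms(2) by (intro integrable_divide integrable_norm)
    show "(\<lambda>t. g t / (complex_of_real (w2 k t) - z)) \<in> borel_measurable torus"
      using borel_measurable_integrable[OF assms(2)] by measurable
    show "AE t in torus. norm (g t / (complex_of_real (w2 k t) - z)) \<le> norm (norm (g t) / d)"
    proof (rule AE_I2)
      fix t assume "t \<in> space torus"
      then have "d \<le> cmod (complex_of_real (w2 k t) - z)"
        using d(2) assms(1) by simp
      then have "cmod (g t) / cmod (complex_of_real (w2 k t) - z) \<le> cmod (g t) / d"
        using d(1) by (intro divide_left_mono mult_pos_pos) auto
      then show "norm (g t / (complex_of_real (w2 k t) - z)) \<le> norm (norm (g t) / d)"
        using d(1) by (simp add: norm_divide)
    qed
  qed
qed

lemma integral_second_component:
  assumes k: "k \<in> T3" and g: "g \<in> H1"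
  shows "integral\<^sup>L torus (\<lambda>s. second_component mu z g (k, s)) = - (complex_of_real mu / 2) *
     (g k * Iint k z + integral\<^sup>L torus (\<lambda>t. g t / (complex_of_real (w2 k t) - z)))"
proof -
  have inverse: "integrable torus (\<lambda>t. 1 / (complex_of_real (w2 k t) - z))"
    using integrable_divide_w2[OF k torus.integrable_const[of 1]] .
  have "integral\<^sup>L torus (\<lambda>s. second_component mu z g (k, s)) = integral\<^sup>L torus (\<lambda>s.
      - (complex_of_real mu / 2) * (g k * (1 / (complex_of_real (w2 k s) - z)) + g s / (complex_of_real (w2 k s) - z)))"
  proof (intro Bochner_Integration.integral_cong refl)
    have split: "- m * (a + b) / (2 * X) = - (m / 2) * (a * (1 / X) + b / X)" for m a b X :: complex
      by (cases "X = 0") (simp_all add: field_simps)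
    show "second_component mu z g (k, s) = - (complex_of_real mu / 2) *
        (g k * (1 / (complex_of_real (w2 k s) - z)) + g s / (complex_of_real (w2 k s) - z))" for s
      unfolding second_component_def fst_conv snd_conv by (rule split)
  qed
  also have "\<dots> = - (complex_of_real mu / 2) * (g k * Iint k z + integral\<^sup>L torus (\<lambda>t. g t / (complex_of_real (w2 k t) - z)))"
    by (simp only: integral_mult_right_zero Iint_def Bochner_Integration.integral_add[OF
          integrable_mult_right[OF inverse] integrable_divide_w2[OF k H1_integrable[OF g]]])
  finally show ?thesis .
qed

lemma second_component_H2:
  assumes g: "g \<in> H1"
  shows "second_component mu z g \<in> H2"
proof -
  obtain d where d: "d > 0" "\<And>a b. a \<in> T3 \<Longrightarrow> b \<in> T3 \<Longrightarrow> d \<le> cmod (complex_of_real (w2 a b) - z)"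
    using band_gap[OF off_band] by blast
  have gm: "g \<in> borel_measurable torus" and gi: "integrable torus (\<lambda>x. (cmod (g x))^2)"
    using g by (auto simp: H1_def sq_int_def)
  have measurable: "second_component mu z g \<in> borel_measurable torus2"
    by (rule borel_measurable_second_component[OF gm])
  define C where "C = 2 * (\<bar>mu\<bar> / (2 * d))^2"
  have "integrable torus2 (\<lambda>x. (cmod (second_component mu z g x))^2)"
  proof (rule Bochner_Integration.integrable_bound)
    show "integrable torus2 (\<lambda>x. C * ((cmod (g (fst x)))^2 + (cmod (g (snd x)))^2))"
      using integrable_torus2_fst[OF gi] integrable_torus2_snd[OF gi] by auto
    show "(\<lambda>x. (cmod (second_component mu z g x))^2) \<in> borel_measurable torus2"
      using measurable by measurable
    show "AE x in torus2. norm ((cmod (second_component mu z g x))^2)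
        \<le> norm (C * ((cmod (g (fst x)))^2 + (cmod (g (snd x)))^2))"
    proof (rule AE_I2)
      fix x assume "x \<in> space torus2"
      then have dx: "d \<le> cmod (complex_of_real (w2 (fst x) (snd x)) - z)"
        using d(2) by (auto simp: mem_Times_iff)
      show "norm ((cmod (second_component mu z g x))^2)
          \<le> norm (C * ((cmod (g (fst x)))^2 + (cmod (g (snd x)))^2))"
        using norm_second_component_square_le[OF d(1) dx] by (simp add: C_def)
    qed
  qed
  moreover have "AE x in torus2. second_component mu z g x = second_component mu z g (snd x, fst x)"
    by (simp add: second_component_def w2_commute add.commute)
  ultimately show ?thesis
    using measurable by (simp add: H2_def sq_int_def)
qed

end

section \<open>Correspondence of eigenvectors\<close>

context
  fixes mu gamma :: real and z :: complex
  assumes not_in_Sigma: "z \<notin> Sigma_mu mu gamma"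
begin

lemma off_band: "z \<notin> complex_of_real ` {mlow_all..Mup_all}"
  using not_in_Sigma by (simp add: Sigma_mu_def)

lemma first_equation_iff_fixed_point:
  assumes k: "k \<in> T3" and g: "g \<in> H1"
  shows "A1 mu gamma g (second_component mu z g) k = z * g k \<longleftrightarrow> T_op mu gamma z g k = g k"
proof -
  have solve: "w * x + m * (- (m / 2) * (x * I + J)) = z * x \<longleftrightarrow> m^2 / (2 * D) * J = x"
    if "D = w - z - m^2 / 2 * I" and "D \<noteq> 0" for w m x I J D :: complex
  proof -
    have "w * x + m * (- (m / 2) * (x * I + J)) - z * x = (2 * D * x - m^2 * J) / 2"
      unfolding that(1) by (simp add: field_simps power2_eq_square)
    moreover have "m^2 / (2 * D) * J = x \<longleftrightarrow> 2 * D * x - m^2 * J = 0"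
      using that(2) by (auto simp: field_simps)
    ultimately show ?thesis
      by (metis divide_eq_0_iff right_minus_eq zero_neq_numeral)
  qed
  show ?thesis
    unfolding A1_def integral_second_component[OF off_band k g] T_op_def
    using solve[OF _ Delta_mu_nonzero[OF not_in_Sigma k]] by (simp add: Delta_mu_def)
qed

lemma eigvecs_A_second_component:
  assumes "(f1, f2) \<in> eigvecs_A mu gamma z"
  shows "AE x in torus2. f2 x = second_component mu z f1 x"
proof -
  have "AE x in torus2. A2 mu f1 f2 x = z * f2 x"
    using assms by (simp add: eigvecs_A_def)
  then show ?thesis
  proof (rule AE_mp[OF _ AE_I2], intro impI)
    fix x assume "x \<in> space torus2" and "A2 mu f1 f2 x = z * f2 x"
    moreover have "complex_of_real (w2 (fst x) (snd x)) - z \<noteq> 0"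
      using w2_minus_nonzero[OF off_band] \<open>x \<in> space torus2\<close> by (auto simp: mem_Times_iff)
    ultimately show "f2 x = second_component mu z f1 x"
      by (auto simp: A2_def second_component_def field_simps)
  qed
qed

lemma eigvecs_T_imp_eigvecs_A:
  assumes "g \<in> eigvecs_T mu gamma z 1"
  shows "(g, second_component mu z g) \<in> eigvecs_A mu gamma z"
proof -
  have g: "g \<in> H1" and fixed: "AE k in torus. T_op mu gamma z g k = 1 * g k"
    using assms by (auto simp: eigvecs_T_def)
  have "AE k in torus. A1 mu gamma g (second_component mu z g) k = z * g k"
    using fixed AE_space by eventually_elim (simp add: first_equation_iff_fixed_point g)
  moreover have "AE x in torus2. A2 mu g (second_component mu z g) x = z * second_component mu z g x"
  proof (rule AE_I2)
    fix x assume "x \<in> space torus2"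
    then have "complex_of_real (w2 (fst x) (snd x)) - z \<noteq> 0"
      using w2_minus_nonzero[OF off_band] by (auto simp: mem_Times_iff)
    then show "A2 mu g (second_component mu z g) x = z * second_component mu z g x"
      by (simp add: A2_def second_component_def field_simps)
  qed
  ultimately show ?thesis
    using g second_component_H2[OF off_band g] by (simp add: eigvecs_A_def)
qed

lemma eigvecs_A_imp_eigvecs_T:
  assumes f: "f \<in> eigvecs_A mu gamma z"
  shows "fst f \<in> eigvecs_T mu gamma z 1"
proof -
  obtain f1 f2 where f_def: "f = (f1, f2)"
    by (cases f)
  have f12: "(f1, f2) \<in> eigvecs_A mu gamma z"
    using f by (simp add: f_def)
  then have f1: "f1 \<in> H1" and f2: "f2 \<in> borel_measurable (torus \<Otimes>\<^sub>M torus)"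
    and first: "AE k in torus. A1 mu gamma f1 f2 k = z * f1 k"
    by (auto simp: eigvecs_A_def H2_def sq_int_def torus2_def)
  have sc: "second_component mu z f1 \<in> borel_measurable (torus \<Otimes>\<^sub>M torus)"
    using borel_measurable_second_component f1 by (simp add: H1_def sq_int_def torus2_def)
  have "AE k in torus. AE s in torus. f2 (k, s) = second_component mu z f1 (k, s)"
    using torus2.AE_pair[OF eigvecs_A_second_component[OF f12, unfolded torus2_def]] by simp
  then have "AE k in torus. A1 mu gamma f1 f2 k = A1 mu gamma f1 (second_component mu z f1) k"
    using AE_space
  proof eventually_elim
    case (elim k)
    then have "integral\<^sup>L torus (\<lambda>s. f2 (k, s)) = integral\<^sup>L torus (\<lambda>s. second_component mu z f1 (k, s))"
      by (intro integral_cong_AE measurable_Pair2[OF f2] measurable_Pair2[OF sc]) simp_all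
    then show ?case
      by (simp add: A1_def)
  qed
  then have "AE k in torus. T_op mu gamma z f1 k = 1 * f1 k"
    using first AE_space by eventually_elim (simp add: first_equation_iff_fixed_point[symmetric] f1)
  then show ?thesis
    using f1 by (simp add: f_def eigvecs_T_def)
qed

lemma null_lincomb_eigvecs_A_iff:
  assumes F: "\<And>i. i < n \<Longrightarrow> F i \<in> eigvecs_A mu gamma z"
  shows "null_H (lincomb_H n c F) \<longleftrightarrow> (AE k in torus. (\<Sum>i<n. c i * fst (F i) k) = 0)"
proof
  assume "null_H (lincomb_H n c F)"
  then show "AE k in torus. (\<Sum>i<n. c i * fst (F i) k) = 0"
    by (simp add: null_H_def lincomb_H_def)
next
  assume first_null: "AE k in torus. (\<Sum>i<n. c i * fst (F i) k) = 0"
  have "fst (F i) \<in> borel_measurable torus" if "i < n" for i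
    using F[OF that] by (cases "F i") (simp add: eigvecs_A_def H1_def sq_int_def)
  then have "(\<lambda>k. \<Sum>i<n. c i * fst (F i) k) \<in> borel_measurable torus"
    by (intro borel_measurable_sum borel_measurable_times borel_measurable_const) auto
  note second_null = second_component_null[OF this first_null, of mu z]
  have "AE x in torus2. \<forall>i\<in>{..<n}. snd (F i) x = second_component mu z (fst (F i)) x"
  proof (intro AE_finite_allI finite_lessThan)
    fix i assume "i \<in> {..<n}"
    then show "AE x in torus2. snd (F i) x = second_component mu z (fst (F i)) x"
      using eigvecs_A_second_component[of "fst (F i)" "snd (F i)"] F by simp
  qed
  then have "AE x in torus2. (\<Sum>i<n. c i * snd (F i) x) = 0"
    using second_null
  proof eventually_elim
    case (elim x)
    then have "(\<Sum>i<n. c i * snd (F i) x) = (\<Sum>i<n. c i * second_component mu z (fst (F i)) x)"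
      by (intro sum.cong) auto
    also have "\<dots> = 0"
      using elim(2) by (simp add: second_component_sum)
    finally show ?case .
  qed
  with first_null show "null_H (lincomb_H n c F)"
    by (simp add: null_H_def lincomb_H_def)
qed

lemma is_eigenvalue_A_iff_T: "is_eigenvalue_A mu gamma z \<longleftrightarrow> is_eigenvalue_T mu gamma z 1"
proof
  assume "is_eigenvalue_A mu gamma z"
  then obtain f where f: "f \<in> eigvecs_A mu gamma z" and "\<not> null_H f"
    unfolding is_eigenvalue_A_def by blast
  then have "\<not> (AE k in torus. fst f k = 0)"
    using null_lincomb_eigvecs_A_iff[of 1 "\<lambda>_. f" "\<lambda>_. 1"] by (simp add: lincomb_H_def)
  with eigvecs_A_imp_eigvecs_T[OF f] show "is_eigenvalue_T mu gamma z 1"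
    unfolding is_eigenvalue_T_def by blast
next
  assume "is_eigenvalue_T mu gamma z 1"
  then obtain g where "g \<in> eigvecs_T mu gamma z 1" and "\<not> (AE k in torus. g k = 0)"
    unfolding is_eigenvalue_T_def by blast
  then have "(g, second_component mu z g) \<in> eigvecs_A mu gamma z"
    and "\<not> null_H (g, second_component mu z g)"
    using eigvecs_T_imp_eigvecs_A by (simp_all add: null_H_def)
  then show "is_eigenvalue_A mu gamma z"
    unfolding is_eigenvalue_A_def by blast
qed

lemma independent_eigvecs_A_iff_T:
  "(\<exists>F. (\<forall>i<n. F i \<in> eigvecs_A mu gamma z) \<and> (\<forall>c. null_H (lincomb_H n c F) \<longrightarrow> (\<forall>i<n. c i = 0)))
   \<longleftrightarrow> (\<exists>G. (\<forall>i<n. G i \<in> eigvecs_T mu gamma z 1) \<and>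
      (\<forall>c. (AE k in torus. (\<Sum>i<n. c i * G i k) = 0) \<longrightarrow> (\<forall>i<n. c i = 0)))"
proof
  assume "\<exists>F. (\<forall>i<n. F i \<in> eigvecs_A mu gamma z) \<and> (\<forall>c. null_H (lincomb_H n c F) \<longrightarrow> (\<forall>i<n. c i = 0))"
  then obtain F where F: "\<forall>i<n. F i \<in> eigvecs_A mu gamma z"
    and independent: "\<forall>c. null_H (lincomb_H n c F) \<longrightarrow> (\<forall>i<n. c i = 0)"
    by blast
  show "\<exists>G. (\<forall>i<n. G i \<in> eigvecs_T mu gamma z 1) \<and>
      (\<forall>c. (AE k in torus. (\<Sum>i<n. c i * G i k) = 0) \<longrightarrow> (\<forall>i<n. c i = 0))"
    using F independent null_lincomb_eigvecs_A_iff[of n F] eigvecs_A_imp_eigvecs_T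
    by (intro exI[of _ "\<lambda>i. fst (F i)"]) auto
next
  assume "\<exists>G. (\<forall>i<n. G i \<in> eigvecs_T mu gamma z 1) \<and>
      (\<forall>c. (AE k in torus. (\<Sum>i<n. c i * G i k) = 0) \<longrightarrow> (\<forall>i<n. c i = 0))"
  then obtain G where G: "\<forall>i<n. G i \<in> eigvecs_T mu gamma z 1"
    and independent: "\<forall>c. (AE k in torus. (\<Sum>i<n. c i * G i k) = 0) \<longrightarrow> (\<forall>i<n. c i = 0)"
    by blast
  let ?F = "\<lambda>i. (G i, second_component mu z (G i))"
  have F: "\<forall>i<n. ?F i \<in> eigvecs_A mu gamma z"
    using G eigvecs_T_imp_eigvecs_A by blast
  show "\<exists>F. (\<forall>i<n. F i \<in> eigvecs_A mu gamma z) \<and> (\<forall>c. null_H (lincomb_H n c F) \<longrightarrow> (\<forall>i<n. c i = 0))"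
    using F independent null_lincomb_eigvecs_A_iff[of n ?F] by (intro exI[of _ ?F]) auto
qed

end

theorem theorem1:
  fixes mu gamma :: real and z :: complex
  assumes "mu > 0"
    and "z \<notin> Sigma_mu mu gamma"
  shows "(is_eigenvalue_A mu gamma z \<longleftrightarrow> is_eigenvalue_T mu gamma z 1)
         \<and> mult_A mu gamma z = mult_T mu gamma z 1"
  unfolding mult_A_def mult_T_def independent_eigvecs_A_iff_T[OF assms(2)]
  using is_eigenvalue_A_iff_T[OF assms(2)] by simp

end
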